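(* If $n$ is large enough, then $\mathrm{ex}^{\mathrm{col}}(n,(C_4,K_2),F_2)=\binom{\lfloor n/2\rfloor}{2}\binom{\lceil n/2\rceil}{2}+1$.
   Context: $F_2$ (the 2-fan) is the graph consisting of two triangles sharing exactly one vertex. $C_4$ is the 4-cycle. $\mathcal N(H,G)$ is the number of subgraphs of $G$ isomorphic to $H$. For a graph $G$ with edges colored $1,2$, $G_i$ is the subgraph of edges of color $i$; $\mathrm{ex}^{\mathrm{col}}(n,(H_1,H_2),F)$ is the maximum of $\mathcal N(H_1,G_1)+\mathcal N(H_2,G_2)$ over all $F$-free $n$-vertex graphs $G$ and all 2-colorings of their edges. *)

theory Defs
  imports Main
begin

definition is_graph_on :: "nat \<Rightarrow> nat set set \<Rightarrow> bool" where
  "is_graph_on n E \<longleftrightarrow> (\<forall>e\<in>E. e \<subseteq> {..<n} \<and> card e = 2)"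

text \<open>The 2-fan F_2: two triangles sharing exactly one vertex. G contains F_2 as a
(not necessarily induced) subgraph iff there are five distinct vertices a,b,c,d,e
with ab, ac, bc, ad, ae, de all edges.\<close>

definition F2_free :: "nat set set \<Rightarrow> bool" where
  "F2_free E \<longleftrightarrow> \<not> (\<exists>a b c d e. distinct [a, b, c, d, e] \<and>
      {a, b} \<in> E \<and> {a, c} \<in> E \<and> {b, c} \<in> E \<and>
      {a, d} \<in> E \<and> {a, e} \<in> E \<and> {d, e} \<in> E)"

definition is_C4 :: "nat set set \<Rightarrow> bool" where
  "is_C4 S \<longleftrightarrow> (\<exists>a b c d. distinct [a, b, c, d] \<and> S = {{a, b}, {b, c}, {c, d}, {d, a}})"

text \<open>N(C_4, G): number of subgraphs of G isomorphic to C_4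
(subgraphs without isolated vertices are determined by their edge set).\<close>

definition num_C4 :: "nat set set \<Rightarrow> nat" where
  "num_C4 E = card {S. S \<subseteq> E \<and> is_C4 S}"

text \<open>N(K_2, G) is the number of edges, i.e. card E.
A 2-colouring of E is given by the set E1 \<subseteq> E of edges of colour 1;
colour 2 edges are E - E1.\<close>

definition excol_C4_K2_F2 :: "nat \<Rightarrow> nat" where
  "excol_C4_K2_F2 n = Max {num_C4 E1 + card (E - E1) | E E1.
      is_graph_on n E \<and> F2_free E \<and> E1 \<subseteq> E}"

end

theory Submission
  imports Defs
begin

text \<open>
Let M be the Mantel number of n - 2. For an edge ab of an F_2-free graph, the pairs (c, d)
closing abcd into a 4-cycle have c adjacent to b and d adjacent to a, and F_2-freeness confines
them to a product of two disjoint sets of at most n - 2 vertices in total, so there are at most M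
of them. Every 4-cycle is counted once from each of its 8 arcs, hence 4 N(C_4, G_1) \<le> e(G_1) M;
as M \<ge> 4, colour 1 is worth at least as much as colour 2 per edge. An F_2-free graph has at most
\<lfloor>n^2/4\<rfloor> + 1 edges, and \<lfloor>n^2/4\<rfloor> M / 4 is the claimed value, so only extremal graphs need
more care. Those have minimum degree at least n/2 and contain a triangle, hence an edge with
three common neighbours; such an edge closes at most 4 four-cycles from either end, and the
resulting loss of 2 (M - 4) in colour 1, or the use of colour 2 on it, absorbs the extra edge.

The bound is attained by colouring K_{\<lfloor>n/2\<rfloor>,\<lceil>n/2\<rceil>} with colour 1 and adding one
edge inside a part with colour 2.
\<close>

lemma exists_other_than_two:
  assumes "finite N" "3 \<le> card N"
  shows "\<exists>z\<in>N. z \<noteq> x \<and> z \<noteq> y"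
proof -
  have "card N - card {x, y} \<le> card (N - {x, y})" by (rule diff_card_le_card_Diff) simp
  moreover have "card {x, y} \<le> 2" by (cases "x = y") auto
  ultimately have "card (N - {x, y}) \<noteq> 0" using assms(2) by linarith
  then show ?thesis by (metis Diff_iff card.empty ex_in_conv insertCI)
qed

lemma card_le_mult_if_subset_Times:
  "P \<subseteq> X \<times> Y \<Longrightarrow> finite X \<Longrightarrow> finite Y \<Longrightarrow> card P \<le> card X * card Y"
  using card_mono[of "X \<times> Y" P] by (simp add: card_cartesian_product)

lemma card_eq_sum_card_fibres:
  assumes "finite A"
  shows "card A = (\<Sum>y\<in>f ` A. card {x\<in>A. f x = y})"
proof -
  have "card (\<Union>y\<in>f ` A. {x\<in>A. f x = y}) = (\<Sum>y\<in>f ` A. card {x\<in>A. f x = y})"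
    by (rule card_UN_disjoint) (use assms in auto)
  moreover have "(\<Union>y\<in>f ` A. {x\<in>A. f x = y}) = A" by auto
  ultimately show ?thesis by simp
qed

lemma card_add3_le_inclusion_exclusion:
  assumes "finite X" "finite Y" "finite Z"
  shows "card X + card Y + card Z \<le>
    card (X \<union> Y \<union> Z) + card (X \<inter> Y) + card (X \<inter> Z) + card (Y \<inter> Z)"
proof -
  have "card X + card Y = card (X \<union> Y) + card (X \<inter> Y)" by (rule card_Un_Int[OF assms(1,2)])
  moreover have "card (X \<union> Y) + card Z = card (X \<union> Y \<union> Z) + card ((X \<union> Y) \<inter> Z)"
    by (rule card_Un_Int) (use assms in auto)
  moreover have "card ((X \<union> Y) \<inter> Z) \<le> card (X \<inter> Z) + card (Y \<inter> Z)"
    by (metis Int_Un_distrib2 card_Un_le)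
  ultimately show ?thesis by linarith
qed

definition graph_on :: "'a set \<Rightarrow> 'a set set \<Rightarrow> bool" where
  "graph_on V E \<longleftrightarrow> finite V \<and> (\<forall>e\<in>E. e \<subseteq> V \<and> card e = 2)"

definition neighbours :: "'a set set \<Rightarrow> 'a \<Rightarrow> 'a set" where
  "neighbours E v = {u. {v, u} \<in> E}"

lemma is_graph_on_iff: "is_graph_on n E \<longleftrightarrow> graph_on {..<n} E"
  unfolding is_graph_on_def graph_on_def by simp

lemma neighbours_iff: "u \<in> neighbours E v \<longleftrightarrow> {v, u} \<in> E"
  unfolding neighbours_def by simp

lemma graph_on_edgeD: "graph_on V E \<Longrightarrow> {x, y} \<in> E \<Longrightarrow> x \<noteq> y \<and> x \<in> V \<and> y \<in> V"
  unfolding graph_on_def by (cases "x = y") auto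

lemma graph_on_finite_edges: "graph_on V E \<Longrightarrow> finite E"
  unfolding graph_on_def by (metis Pow_iff finite_Pow_iff finite_subset subsetI)

lemma graph_on_subset: "graph_on V E \<Longrightarrow> E' \<subseteq> E \<Longrightarrow> graph_on V E'"
  unfolding graph_on_def by blast

lemma graph_on_delete_vertex: "graph_on V E \<Longrightarrow> graph_on (V - {v}) {e\<in>E. v \<notin> e}"
  unfolding graph_on_def by auto

lemma neighbours_subset: "graph_on V E \<Longrightarrow> neighbours E v \<subseteq> V"
  unfolding neighbours_def by (auto dest: graph_on_edgeD)

lemma not_mem_neighbours_self: "graph_on V E \<Longrightarrow> v \<notin> neighbours E v"
  unfolding neighbours_def graph_on_def by fastforce

lemma finite_neighbours: "graph_on V E \<Longrightarrow> finite (neighbours E v)"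
  using neighbours_subset unfolding graph_on_def by (metis finite_subset)

lemma card_edges_delete_vertex:
  assumes g: "graph_on V E"
  shows "card E = card {e\<in>E. v \<notin> e} + card (neighbours E v)"
proof -
  have "{e\<in>E. v \<in> e} = (\<lambda>u. {v, u}) ` neighbours E v"
  proof (intro equalityI subsetI)
    fix e assume e: "e \<in> {e\<in>E. v \<in> e}"
    then have "card e = 2" using g unfolding graph_on_def by blast
    then obtain x y where "e = {x, y}" by (meson card_2_iff)
    with e have "e = {v, if x = v then y else x}" by auto
    with e show "e \<in> (\<lambda>u. {v, u}) ` neighbours E v" unfolding neighbours_def by auto
  qed (auto simp: neighbours_def)
  moreover have "inj_on (\<lambda>u. {v, u}) (neighbours E v)"
    using not_mem_neighbours_self[OF g, of v] by (auto simp: inj_on_def doubleton_eq_iff)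
  ultimately have "card {e\<in>E. v \<in> e} = card (neighbours E v)" by (simp add: card_image)
  moreover have "card E = card {e\<in>E. v \<notin> e} + card {e\<in>E. v \<in> e}"
    using graph_on_finite_edges[OF g]
      by (subst card_Un_disjoint[symmetric]) (auto intro: arg_cong[where f=card])
  ultimately show ?thesis by simp
qed

lemma common_neighbour_exists:
  assumes g: "graph_on V E" and deg: "card V < card (neighbours E a) + card (neighbours E b)"
  shows "\<exists>c. {a, c} \<in> E \<and> {b, c} \<in> E"
proof (rule ccontr)
  assume "\<not> ?thesis"
  then have "neighbours E a \<inter> neighbours E b = {}" unfolding neighbours_def by blast
  then have "card (neighbours E a \<union> neighbours E b) = card (neighbours E a) + card (neighbours E b)"
    using finite_neighbours[OF g] by (simp add: card_Un_disjoint)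
  moreover have "card (neighbours E a \<union> neighbours E b) \<le> card V"
    using g neighbours_subset[OF g] unfolding graph_on_def by (metis Un_least card_mono)
  ultimately show False using deg by simp
qed

lemma F2_freeD:
  assumes "F2_free E" "distinct [a, b, c, d, e]"
    and "{a, b} \<in> E" "{a, c} \<in> E" "{b, c} \<in> E" "{a, d} \<in> E" "{a, e} \<in> E" "{d, e} \<in> E"
  shows False
  using assms unfolding F2_free_def by blast

lemma F2_free_subset: "F2_free E \<Longrightarrow> E' \<subseteq> E \<Longrightarrow> F2_free E'"
  unfolding F2_free_def by blast

section \<open>Mantel's theorem\<close>

definition mantel_number :: "nat \<Rightarrow> nat" where
  "mantel_number n = n div 2 * ((n + 1) div 2)"

lemma mantel_number_Suc: "mantel_number (Suc n) = mantel_number n + Suc n div 2"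
proof -
  obtain j where "n = 2 * j \<or> n = 2 * j + 1" by (metis oddE evenE)
  then show ?thesis unfolding mantel_number_def by (elim disjE) (simp_all add: algebra_simps)
qed

lemma mult_le_mantel_number:
  assumes "x + y \<le> n"
  shows "x * y \<le> mantel_number n"
proof -
  define p q where "p = n div 2" and "q = (n + 1) div 2"
  have pq: "p + q = n" "p \<le> q" "q \<le> p + 1" unfolding p_def q_def by auto
  have "x * y \<le> p * q" if xy: "x \<le> y" "x + y \<le> n" for x y
  proof -
    have "x \<le> p" using xy pq by linarith
    then obtain i j where ij: "p = x + i" "q = x + j" using pq(2) by (metis le_Suc_ex le_trans)
    have "x * y \<le> x * (x + i + j)" using xy ij pq(1) by (intro mult_le_mono2) linarith
    also have "\<dots> \<le> p * q" using ij by (simp add: algebra_simps)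
    finally show ?thesis .
  qed
  then have "x * y \<le> p * q"
    using assms by (metis add.commute mult.commute nat_le_linear)
  then show ?thesis unfolding mantel_number_def p_def q_def .
qed

theorem mantel:
  assumes "graph_on V E" and "\<forall>a b c. {a, b} \<in> E \<longrightarrow> {a, c} \<in> E \<longrightarrow> {b, c} \<notin> E"
  shows "card E \<le> mantel_number (card V)"
  using assms
proof (induction "card V" arbitrary: V E)
  case 0
  then have "E = {}"
    unfolding graph_on_def by (metis card_0_eq card.empty ex_in_conv subset_empty zero_neq_numeral)
  then show ?case by simp
next
  case (Suc n)
  note g = Suc.prems(1) and triangle_free = Suc.prems(2)
  have finV: "finite V" using g unfolding graph_on_def by blast
  show ?case
  proof (cases "\<exists>v\<in>V. card (neighbours E v) \<le> Suc n div 2")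
    case True
    then obtain v where v: "v \<in> V" "card (neighbours E v) \<le> Suc n div 2" by blast
    have n: "card (V - {v}) = n" using Suc.hyps(2) v finV by simp
    have "card {e\<in>E. v \<notin> e} \<le> mantel_number (card (V - {v}))"
      by (rule Suc.hyps(1)) (use n v graph_on_delete_vertex[OF g] triangle_free in auto)
    then show ?thesis
      using card_edges_delete_vertex[OF g, of v] v mantel_number_Suc[of n] Suc.hyps(2) n by simp
  next
    case False
    show ?thesis
    proof (rule ccontr)
      assume "\<not> ?thesis"
      then obtain e where "e \<in> E" by fastforce
      then obtain a b where ab: "{a, b} \<in> E" using g unfolding graph_on_def by (metis card_2_iff)
      have "Suc n div 2 < card (neighbours E a)" "Suc n div 2 < card (neighbours E b)"
        using False graph_on_edgeD[OF g ab] by auto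
      moreover have "Suc n \<le> 2 * (Suc n div 2) + 1" by linarith
      ultimately have "card V < card (neighbours E a) + card (neighbours E b)"
        using Suc.hyps(2) by linarith
      then obtain c where "{a, c} \<in> E" "{b, c} \<in> E" using common_neighbour_exists[OF g] by blast
      then show False using triangle_free ab by blast
    qed
  qed
qed

section \<open>F_2-free graphs have at most one edge more than Mantel's bound\<close>

lemma F2_free_triangle_neighbour:
  assumes F: "F2_free E" and g: "graph_on V E"
    and tri: "\<forall>a b. {a, b} \<in> E \<longrightarrow> (\<exists>c. {a, c} \<in> E \<and> {b, c} \<in> E)"
    and vxc: "{v, x} \<in> E" "{v, c} \<in> E" "{x, c} \<in> E"
    and vz: "{v, z} \<in> E" "z \<noteq> x" "z \<noteq> c"
  shows "{z, x} \<in> E \<or> {z, c} \<in> E"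
proof (rule ccontr)
  assume nz: "\<not> ?thesis"
  obtain q where q: "{v, q} \<in> E" "{z, q} \<in> E" using tri vz(1) by blast
  have "q \<noteq> x" "q \<noteq> c" using nz q by (auto simp: insert_commute)
  moreover have "v \<noteq> x" "v \<noteq> c" "x \<noteq> c" "v \<noteq> z" "v \<noteq> q" "z \<noteq> q"
    using graph_on_edgeD[OF g] vxc vz q by blast+
  ultimately show False
    by (intro F2_freeD[OF F, of v x c z q]) (use vxc vz q in \<open>auto simp: insert_commute\<close>)
qed

lemma F2_free_K4_neighbours:
  assumes F: "F2_free E" and g: "graph_on V E"
    and tri: "\<forall>a b. {a, b} \<in> E \<longrightarrow> (\<exists>c. {a, c} \<in> E \<and> {b, c} \<in> E)"
    and K4: "{v, x} \<in> E" "{v, c} \<in> E" "{v, z} \<in> E" "{x, c} \<in> E" "{x, z} \<in> E" "{c, z} \<in> E"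
  shows "neighbours E v \<subseteq> {x, c, z}"
proof
  fix y assume "y \<in> neighbours E v"
  then have vy: "{v, y} \<in> E" by (simp add: neighbours_iff)
  show "y \<in> {x, c, z}"
  proof (rule ccontr)
    assume y: "y \<notin> {x, c, z}"
    have d: "v \<noteq> x" "v \<noteq> c" "v \<noteq> z" "x \<noteq> c" "x \<noteq> z" "c \<noteq> z" "v \<noteq> y"
      using graph_on_edgeD[OF g] K4 vy by blast+
    from F2_free_triangle_neighbour[OF F g tri K4(1,2,4) vy] y
    consider "{y, x} \<in> E" | "{y, c} \<in> E" by auto
    then show False
    proof cases
      case 1
      show False by (rule F2_freeD[OF F, of v y x z c])
        (use K4 vy 1 d y in \<open>auto simp: insert_commute\<close>)
    next
      case 2
      show False by (rule F2_freeD[OF F, of v y c z x])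
        (use K4 vy 2 d y in \<open>auto simp: insert_commute\<close>)
    qed
  qed
qed

lemma F2_free_diamond_tip_degree:
  assumes F: "F2_free E" and g: "graph_on V E"
    and tri: "\<forall>a b. {a, b} \<in> E \<longrightarrow> (\<exists>c. {a, c} \<in> E \<and> {b, c} \<in> E)"
    and diamond: "{v, c} \<in> E" "{v, l} \<in> E" "{c, l} \<in> E" "{v, z} \<in> E" "{z, c} \<in> E"
    and tip: "{z, l} \<notin> E" "z \<noteq> l"
  shows "card (neighbours E z) \<le> 2"
proof (rule ccontr)
  assume "\<not> ?thesis"
  then have "3 \<le> card (neighbours E z)" by simp
  then obtain r where r: "r \<in> neighbours E z" "r \<noteq> v" "r \<noteq> c"
    using exists_other_than_two[OF finite_neighbours[OF g], of _ v c] by blast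
  have zr: "{z, r} \<in> E" using r(1) by (simp add: neighbours_iff)
  have d: "v \<noteq> c" "v \<noteq> l" "c \<noteq> l" "v \<noteq> z" "z \<noteq> c" "z \<noteq> r"
    using graph_on_edgeD[OF g] diamond zr by blast+
  have rl: "r \<noteq> l" using zr tip by blast
  have rv: "{v, r} \<notin> E"
  proof
    assume "{v, r} \<in> E"
    then show False
      by (intro F2_freeD[OF F, of v z r c l])
        (use diamond zr r d rl tip in \<open>auto simp: insert_commute\<close>)
  qed
  obtain q where q: "{z, q} \<in> E" "{r, q} \<in> E" using tri zr by blast
  have dq: "q \<noteq> v" "r \<noteq> q" "z \<noteq> q" using q rv graph_on_edgeD[OF g] by (auto simp: insert_commute)
  show False
  proof (cases "q = c")
    case False
    show False
      by (intro F2_freeD[OF F, of z v c r q])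
        (use diamond zr r q d dq False in \<open>auto simp: insert_commute\<close>)
  next
    case True
    show False
      by (intro F2_freeD[OF F, of c v l z r])
        (use diamond zr r q d rl tip True in \<open>auto simp: insert_commute\<close>)
  qed
qed

lemma no_closed_proper_subset_if_min_degree:
  assumes g: "graph_on V E" and K: "K \<subseteq> V" "K \<noteq> {}" "K \<noteq> V"
    and closed: "\<forall>u\<in>K. neighbours E u \<subseteq> K"
    and deg: "\<forall>u\<in>V. card V div 2 < card (neighbours E u)"
  shows False
proof -
  have finV: "finite V" using g unfolding graph_on_def by blast
  then have finK: "finite K" using K(1) finite_subset by blast
  obtain u s where u: "u \<in> K" and s: "s \<in> V" "s \<notin> K" using K by blast
  have "neighbours E u \<subseteq> K - {u}" using closed u not_mem_neighbours_self[OF g] by blast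
  then have "card (neighbours E u) \<le> card (K - {u})" using finK by (simp add: card_mono)
  then have "card (neighbours E u) \<le> card K - 1" using u finK by simp
  moreover have "neighbours E s \<subseteq> V - K - {s}"
  proof
    fix y assume y: "y \<in> neighbours E s"
    have "y \<notin> K"
    proof
      assume "y \<in> K"
      moreover have "s \<in> neighbours E y" using y by (simp add: neighbours_iff insert_commute)
      ultimately show False using closed s(2) by blast
    qed
    then show "y \<in> V - K - {s}"
      using y neighbours_subset[OF g] not_mem_neighbours_self[OF g] by blast
  qed
  then have "card (neighbours E s) \<le> card (V - K - {s})" using finV by (simp add: card_mono)
  then have "card (neighbours E s) \<le> card V - card K - 1"
    using finV finK K(1) s by (simp add: card_Diff_subset)
  moreover have "card K \<le> card V" using card_mono[OF finV K(1)] .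
  moreover have "card V \<le> 2 * (card V div 2) + 1" by linarith
  moreover have "card V div 2 < card (neighbours E u)" "card V div 2 < card (neighbours E s)"
    using deg u s K(1) by auto
  ultimately show False by linarith
qed

lemma F2_free_K4_closed:
  assumes F: "F2_free E" and g: "graph_on V E"
    and tri: "\<forall>a b. {a, b} \<in> E \<longrightarrow> (\<exists>c. {a, c} \<in> E \<and> {b, c} \<in> E)"
    and K4: "{v, x} \<in> E" "{v, c} \<in> E" "{v, z} \<in> E" "{x, c} \<in> E" "{x, z} \<in> E" "{c, z} \<in> E"
  shows "\<forall>u\<in>{v, x, c, z}. neighbours E u \<subseteq> {v, x, c, z}"
proof -
  note K4_neighbours = F2_free_K4_neighbours[OF F g tri]
  have "neighbours E v \<subseteq> {x, c, z}" using K4_neighbours[of v x c z] K4 by blast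
  moreover have "neighbours E x \<subseteq> {v, c, z}"
    using K4_neighbours[of x v c z] K4 by (auto simp: insert_commute)
  moreover have "neighbours E c \<subseteq> {v, x, z}"
    using K4_neighbours[of c v x z] K4 by (auto simp: insert_commute)
  moreover have "neighbours E z \<subseteq> {v, x, c}"
    using K4_neighbours[of z v x c] K4 by (auto simp: insert_commute)
  ultimately show ?thesis by blast
qed

lemma edges_in_triangles_if_min_degree:
  assumes g: "graph_on V E" and deg: "\<forall>u\<in>V. card V div 2 < card (neighbours E u)"
  shows "\<forall>a b. {a, b} \<in> E \<longrightarrow> (\<exists>c. {a, c} \<in> E \<and> {b, c} \<in> E)"
proof (intro allI impI)
  fix a b assume "{a, b} \<in> E"
  then have "card V div 2 < card (neighbours E a)" "card V div 2 < card (neighbours E b)"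
    using deg graph_on_edgeD[OF g] by auto
  moreover have "card V \<le> 2 * (card V div 2) + 1" by linarith
  ultimately show "\<exists>c. {a, c} \<in> E \<and> {b, c} \<in> E"
    by (intro common_neighbour_exists[OF g]) linarith
qed

text \<open>Take a triangle vxc and a third neighbour z of v. If z is adjacent to just one of x, c, the
diamond on v, x, c, z has a tip of degree at most 2; otherwise vxcz is a K_4, which is a whole
component.\<close>

lemma F2_free_exists_low_degree:
  assumes F: "F2_free E" and g: "graph_on V E" and n5: "5 \<le> card V"
  shows "\<exists>v\<in>V. card (neighbours E v) \<le> card V div 2"
proof (rule ccontr)
  assume "\<not> ?thesis"
  then have deg: "\<forall>u\<in>V. card V div 2 < card (neighbours E u)" by (auto simp: not_le)
  have deg3: "3 \<le> card (neighbours E u)" if "u \<in> V" for u using deg that n5 by fastforce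
  note tri = edges_in_triangles_if_min_degree[OF g deg]
  obtain v where v: "v \<in> V" using n5 by fastforce
  have "neighbours E v \<noteq> {}" using deg3[OF v] by fastforce
  then obtain x where vx: "{v, x} \<in> E" by (auto simp: neighbours_iff)
  then obtain c where vc: "{v, c} \<in> E" "{x, c} \<in> E" using tri by blast
  obtain z where z: "z \<in> neighbours E v" "z \<noteq> x" "z \<noteq> c"
    using exists_other_than_two[OF finite_neighbours[OF g] deg3[OF v]] by blast
  have vz: "{v, z} \<in> E" using z(1) by (simp add: neighbours_iff)
  have z3: "3 \<le> card (neighbours E z)" using deg3 graph_on_edgeD[OF g vz] by blast
  from F2_free_triangle_neighbour[OF F g tri vx vc vz z(2,3)]
  consider (both) "{z, x} \<in> E" "{z, c} \<in> E" | (only_c) "{z, x} \<notin> E" "{z, c} \<in> E"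
    | (only_x) "{z, x} \<in> E" "{z, c} \<notin> E"
    by blast
  then show False
  proof cases
    case only_c
    have "card (neighbours E z) \<le> 2"
      by (rule F2_free_diamond_tip_degree[OF F g tri, of v c x])
        (use vx vc vz only_c z in \<open>auto simp: insert_commute\<close>)
    then show False using z3 by simp
  next
    case only_x
    have "card (neighbours E z) \<le> 2"
      by (rule F2_free_diamond_tip_degree[OF F g tri, of v x c])
        (use vx vc vz only_x z in \<open>auto simp: insert_commute\<close>)
    then show False using z3 by simp
  next
    case both
    have closed: "\<forall>u\<in>{v, x, c, z}. neighbours E u \<subseteq> {v, x, c, z}"
      by (rule F2_free_K4_closed[OF F g tri vx vc(1) vz vc(2)])
        (use both in \<open>simp_all add: insert_commute\<close>)
    have "{v, x, c, z} \<subseteq> V" using graph_on_edgeD[OF g] vx vc vz by blast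
    moreover have "card {v, x, c, z} \<le> 4" by (simp add: card_insert_if)
    then have "{v, x, c, z} \<noteq> V" using n5 by auto
    ultimately show False
      using no_closed_proper_subset_if_min_degree[OF g _ _ _ closed deg] by blast
  qed
qed

lemma F2_free_five_vertices:
  assumes F: "F2_free E" and g: "graph_on V E" and cV: "card V = 5"
    and v: "v \<in> V" "card (neighbours E v) \<le> 2"
  shows "card E \<le> 7"
proof (rule ccontr)
  assume "\<not> ?thesis"
  let ?E' = "{e\<in>E. v \<notin> e}" and ?W = "V - {v}"
  let ?pairs = "{B. B \<subseteq> ?W \<and> card B = 2}"
  have finV: "finite V" using g unfolding graph_on_def by blast
  have "card ?pairs = 6" using n_subsets[of ?W 2] finV cV v by (simp add: choose_two)
  moreover have sub: "?E' \<subseteq> ?pairs" using g unfolding graph_on_def by blast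
  moreover have finP: "finite ?pairs" using finV by simp
  moreover have "card E = card ?E' + card (neighbours E v)" by (rule card_edges_delete_vertex[OF g])
  ultimately have "card ?E' = card ?pairs" and "card (neighbours E v) = 2"
    using card_mono[OF finP sub] \<open>\<not> card E \<le> 7\<close> v(2) by linarith+
  then have all: "?E' = ?pairs" using card_subset_eq[OF finP sub] by simp
  obtain x y where xy: "neighbours E v = {x, y}" "x \<noteq> y"
    using \<open>card (neighbours E v) = 2\<close> card_2_iff by metis
  have vx: "{v, x} \<in> E" and vy: "{v, y} \<in> E" using xy by (metis insertCI neighbours_iff)+
  have xV: "x \<in> V" "y \<in> V" "v \<noteq> x" "v \<noteq> y" using graph_on_edgeD[OF g] vx vy by blast+
  have "card (V - {v, x, y}) = 2" using cV xV xy v finV by (simp add: card_Diff_subset)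
  then obtain z w where zw: "V - {v, x, y} = {z, w}" "z \<noteq> w" using card_2_iff by metis
  have inE: "{p, q} \<in> E" if "p \<in> V" "q \<in> V" "p \<noteq> v" "q \<noteq> v" "p \<noteq> q" for p q
    using that all by auto
  have zwV: "z \<in> V" "w \<in> V" "z \<notin> {v, x, y}" "w \<notin> {v, x, y}" using zw by blast+
  show False
    by (rule F2_freeD[OF F, of x v y z w])
      (use vx vy xV xy zw zwV inE in \<open>auto simp: insert_commute\<close>)
qed

theorem F2_free_card_edges_le:
  assumes "graph_on V E" and "F2_free E" and "5 \<le> card V"
  shows "card E \<le> mantel_number (card V) + 1"
  using assms
proof (induction "card V" arbitrary: V E)
  case 0
  then show ?case by simp
next
  case (Suc n)
  note g = Suc.prems(1) and F = Suc.prems(2)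
  have finV: "finite V" using g unfolding graph_on_def by blast
  obtain v where v: "v \<in> V" "card (neighbours E v) \<le> Suc n div 2"
    using F2_free_exists_low_degree[OF F g Suc.prems(3)] Suc.hyps(2) by auto
  show ?case
  proof (cases "5 \<le> n")
    case True
    have n: "card (V - {v}) = n" using Suc.hyps(2) v finV by simp
    have "card {e\<in>E. v \<notin> e} \<le> mantel_number (card (V - {v})) + 1"
      by (rule Suc.hyps(1)) (use n True graph_on_delete_vertex[OF g] F2_free_subset[OF F] in auto)
    then show ?thesis
      using card_edges_delete_vertex[OF g, of v] v mantel_number_Suc[of n] Suc.hyps(2) n by simp
  next
    case False
    then have "card V = 5" using Suc by simp
    then show ?thesis using F2_free_five_vertices[OF F g _ v(1)] v(2) Suc.hyps(2)
      by (simp add: mantel_number_def)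
  qed
qed

lemma F2_free_extremal_min_degree:
  assumes g: "graph_on V E" and F: "F2_free E" and n6: "6 \<le> card V"
    and extremal: "card E = mantel_number (card V) + 1" and v: "v \<in> V"
  shows "card V div 2 \<le> card (neighbours E v)"
proof -
  have finV: "finite V" using g unfolding graph_on_def by blast
  have "card {e\<in>E. v \<notin> e} \<le> mantel_number (card (V - {v})) + 1"
    by (rule F2_free_card_edges_le[OF graph_on_delete_vertex[OF g] F2_free_subset[OF F]])
      (use n6 v finV in auto)
  moreover have "card E = card {e\<in>E. v \<notin> e} + card (neighbours E v)"
    by (rule card_edges_delete_vertex[OF g])
  moreover have "mantel_number (card V) = mantel_number (card (V - {v})) + card V div 2"
    using mantel_number_Suc[of "card V - 1"] n6 v finV by simp
  ultimately show ?thesis using extremal by linarith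
qed

section \<open>Counting 4-cycles through oriented edges\<close>

definition arcs :: "'a set set \<Rightarrow> ('a \<times> 'a) set" where
  "arcs E = {(a, b). {a, b} \<in> E}"

definition closing_paths :: "'a set set \<Rightarrow> 'a \<Rightarrow> 'a \<Rightarrow> ('a \<times> 'a) set" where
  "closing_paths E a b =
    {(c, d). distinct [a, b, c, d] \<and> {b, c} \<in> E \<and> {c, d} \<in> E \<and> {d, a} \<in> E}"

definition C4_tuples :: "'a set set \<Rightarrow> (('a \<times> 'a) \<times> ('a \<times> 'a)) set" where
  "C4_tuples E = {((a, b), (c, d)). distinct [a, b, c, d] \<and>
      {a, b} \<in> E \<and> {b, c} \<in> E \<and> {c, d} \<in> E \<and> {d, a} \<in> E}"

definition C4_of :: "('a \<times> 'a) \<times> ('a \<times> 'a) \<Rightarrow> 'a set set" where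
  "C4_of = (\<lambda>((a, b), (c, d)). {{a, b}, {b, c}, {c, d}, {d, a}})"

lemma finite_arcs:
  assumes g: "graph_on V E"
  shows "finite (arcs E)"
proof (rule finite_subset)
  show "arcs E \<subseteq> V \<times> V" unfolding arcs_def using graph_on_edgeD[OF g] by auto
qed (use g in \<open>simp add: graph_on_def\<close>)

lemma card_arcs:
  assumes g: "graph_on V E"
  shows "card (arcs E) = 2 * card E"
proof -
  let ?edge = "\<lambda>(x, y). {x, y}"
  have image: "?edge ` arcs E = E"
  proof
    show "?edge ` arcs E \<subseteq> E" unfolding arcs_def by auto
    show "E \<subseteq> ?edge ` arcs E"
    proof
      fix e assume e: "e \<in> E"
      then obtain x y where "e = {x, y}" using g unfolding graph_on_def by (metis card_2_iff)
      then show "e \<in> ?edge ` arcs E" unfolding arcs_def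
        using e by (auto intro!: image_eqI[where x="(x, y)"])
    qed
  qed
  have "card {z\<in>arcs E. ?edge z = e} = 2" if e: "e \<in> ?edge ` arcs E" for e
  proof -
    obtain x y where "(x, y) \<in> arcs E" "e = {x, y}" using e by auto
    then have xy: "{x, y} \<in> E" "e = {x, y}" unfolding arcs_def by auto
    have "{z\<in>arcs E. ?edge z = e} \<subseteq> {(x, y), (y, x)}"
    proof
      fix z assume "z \<in> {z\<in>arcs E. ?edge z = e}"
      then obtain p q where "z = (p, q)" "{p, q} = {x, y}" using xy(2) by (cases z) auto
      then show "z \<in> {(x, y), (y, x)}" by (auto simp: doubleton_eq_iff)
    qed
    moreover have "{(x, y), (y, x)} \<subseteq> {z\<in>arcs E. ?edge z = e}"
      using xy unfolding arcs_def by (auto simp: insert_commute)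
    ultimately have "{z\<in>arcs E. ?edge z = e} = {(x, y), (y, x)}" by blast
    then show ?thesis using graph_on_edgeD[OF g xy(1)] by simp
  qed
  then show ?thesis using card_eq_sum_card_fibres[OF finite_arcs[OF g], of ?edge] image by simp
qed

lemma finite_closing_paths:
  assumes g: "graph_on V E"
  shows "finite (closing_paths E a b)"
proof (rule finite_subset)
  show "closing_paths E a b \<subseteq> V \<times> V" unfolding closing_paths_def using graph_on_edgeD[OF g] by auto
qed (use g in \<open>simp add: graph_on_def\<close>)

lemma closing_paths_mono: "E' \<subseteq> E \<Longrightarrow> closing_paths E' a b \<subseteq> closing_paths E a b"
  unfolding closing_paths_def by auto

lemma card_C4_tuples:
  assumes g: "graph_on V E"
  shows "card (C4_tuples E) = (\<Sum>(a, b)\<in>arcs E. card (closing_paths E a b))"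
proof -
  have "C4_tuples E = Sigma (arcs E) (\<lambda>(a, b). closing_paths E a b)"
    unfolding C4_tuples_def arcs_def closing_paths_def by auto
  then have "card (C4_tuples E) = (\<Sum>x\<in>arcs E. card ((\<lambda>(a, b). closing_paths E a b) x))"
    using finite_arcs[OF g] finite_closing_paths[OF g] by (simp add: split_beta)
  then show ?thesis by (simp add: case_prod_beta')
qed

lemma image_C4_of: "C4_of ` C4_tuples E = {S. S \<subseteq> E \<and> is_C4 S}"
proof (intro equalityI subsetI)
  fix S assume "S \<in> {S. S \<subseteq> E \<and> is_C4 S}"
  then obtain a b c d
    where S: "distinct [a, b, c, d]" "S = {{a, b}, {b, c}, {c, d}, {d, a}}" "S \<subseteq> E"
    unfolding is_C4_def by auto
  then have "((a, b), (c, d)) \<in> C4_tuples E" unfolding C4_tuples_def by auto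
  moreover have "C4_of ((a, b), (c, d)) = S" unfolding C4_of_def using S by simp
  ultimately show "S \<in> C4_of ` C4_tuples E" by force
qed (auto simp: C4_tuples_def C4_of_def is_C4_def)

text \<open>Each 4-cycle arises from 8 tuples: 4 choices of starting vertex and 2 directions.\<close>

lemma eight_mul_num_C4_le:
  assumes g: "graph_on V E"
  shows "8 * num_C4 E \<le> card (C4_tuples E)"
proof -
  have fin: "finite (C4_tuples E)"
  proof (rule finite_subset)
    show "C4_tuples E \<subseteq> (V \<times> V) \<times> (V \<times> V)"
      unfolding C4_tuples_def using graph_on_edgeD[OF g] by auto
  qed (use g in \<open>simp add: graph_on_def\<close>)
  have fibre: "8 \<le> card {t\<in>C4_tuples E. C4_of t = S}" if "S \<in> C4_of ` C4_tuples E" for S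
  proof -
    obtain a b c d where t: "((a, b), (c, d)) \<in> C4_tuples E" "S = C4_of ((a, b), (c, d))"
      using \<open>S \<in> C4_of ` C4_tuples E\<close> by auto
    let ?T = "{((a, b), (c, d)), ((b, c), (d, a)), ((c, d), (a, b)), ((d, a), (b, c)),
               ((a, d), (c, b)), ((d, c), (b, a)), ((c, b), (a, d)), ((b, a), (d, c))}"
    let ?fibre = "{t\<in>C4_tuples E. C4_of t = S}"
    have rotate: "((q, r), (s, p)) \<in> ?fibre" if "((p, q), (r, s)) \<in> ?fibre" for p q r s
      using that unfolding C4_tuples_def C4_of_def by (auto simp: insert_commute)
    have reflect: "((p, s), (r, q)) \<in> ?fibre" if "((p, q), (r, s)) \<in> ?fibre" for p q r s
      using that unfolding C4_tuples_def C4_of_def by (auto simp: insert_commute)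
    have t0: "((a, b), (c, d)) \<in> ?fibre" using t by simp
    note r1 = rotate[OF t0] note r2 = rotate[OF r1] note r3 = rotate[OF r2]
    note f0 = reflect[OF t0] note f1 = rotate[OF f0] note f2 = rotate[OF f1] note f3 = rotate[OF f2]
    have "?T \<subseteq> ?fibre" using t0 r1 r2 r3 f0 f1 f2 f3 by (simp only: insert_subset empty_subsetI)
    moreover have "card ?T = 8" using t(1) unfolding C4_tuples_def by auto
    ultimately show ?thesis using card_mono[of ?fibre ?T] fin by simp
  qed
  have "(\<Sum>S\<in>C4_of ` C4_tuples E. 8) \<le> (\<Sum>S\<in>C4_of ` C4_tuples E. card {t\<in>C4_tuples E. C4_of t = S})"
    by (rule sum_mono) (rule fibre)
  then have "(\<Sum>S\<in>C4_of ` C4_tuples E. 8) \<le> card (C4_tuples E)"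
    using card_eq_sum_card_fibres[OF fin, of C4_of] by simp
  then show ?thesis unfolding num_C4_def image_C4_of[symmetric] by (simp add: mult.commute)
qed

lemma eight_mul_num_C4_le_sum:
  assumes "graph_on V E"
  shows "8 * num_C4 E \<le> (\<Sum>(a, b)\<in>arcs E. card (closing_paths E a b))"
  using eight_mul_num_C4_le[OF assms] card_C4_tuples[OF assms] by simp

section \<open>4-cycles through an edge of an F_2-free graph\<close>

definition common_neighbours :: "'a set set \<Rightarrow> 'a \<Rightarrow> 'a \<Rightarrow> 'a set" where
  "common_neighbours E a b = neighbours E a \<inter> neighbours E b"

definition private_neighbours :: "'a set set \<Rightarrow> 'a \<Rightarrow> 'a \<Rightarrow> 'a set" where
  "private_neighbours E a b = neighbours E a - insert b (neighbours E b)"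

locale F2_free_edge =
  fixes V :: "nat set" and E :: "nat set set" and a b :: nat
  assumes graph: "graph_on V E" and F2: "F2_free E" and edge: "{a, b} \<in> E"
begin

abbreviation "C \<equiv> common_neighbours E a b"
abbreviation "A \<equiv> private_neighbours E a b"
abbreviation "B \<equiv> private_neighbours E b a"

lemma swap: "F2_free_edge V E b a"
  using graph F2 edge by unfold_locales (simp_all add: insert_commute)

lemma a_neq_b: "a \<noteq> b"
  using graph_on_edgeD[OF graph edge] by blast

lemma mem_C_iff: "x \<in> C \<longleftrightarrow> {a, x} \<in> E \<and> {b, x} \<in> E"
  unfolding common_neighbours_def by (simp add: neighbours_iff)

lemma mem_A_iff: "x \<in> A \<longleftrightarrow> {a, x} \<in> E \<and> x \<noteq> b \<and> {b, x} \<notin> E"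
  unfolding private_neighbours_def by (auto simp: neighbours_iff)

lemma mem_B_iff: "x \<in> B \<longleftrightarrow> {b, x} \<in> E \<and> x \<noteq> a \<and> {a, x} \<notin> E"
  unfolding private_neighbours_def by (auto simp: neighbours_iff)

lemma finite_parts: "finite C" "finite A" "finite B"
  unfolding common_neighbours_def private_neighbours_def using finite_neighbours[OF graph] by auto

lemma card_neighbours_eq: "card (neighbours E a) = card C + card A + 1"
proof -
  have "neighbours E a = C \<union> A \<union> {b}" "b \<notin> C \<union> A" "C \<inter> A = {}"
    using edge not_mem_neighbours_self[OF graph, of b]
    unfolding common_neighbours_def private_neighbours_def by (auto simp: neighbours_iff)
  then show ?thesis using finite_parts by (simp add: card_Un_disjoint)
qed

lemma card_parts: "card (C \<union> A \<union> B) = card C + card A + card B"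
proof -
  have "C \<inter> A = {}" "(C \<union> A) \<inter> B = {}"
    unfolding common_neighbours_def private_neighbours_def by auto
  then show ?thesis using finite_parts by (simp add: card_Un_disjoint)
qed

lemma parts_subset: "C \<union> A \<union> B \<subseteq> V"
  using neighbours_subset[OF graph] unfolding common_neighbours_def private_neighbours_def by blast

lemma card_parts_le: "card C + card A + card B + 2 \<le> card V"
proof -
  have "a \<notin> C \<union> A \<union> B" "b \<notin> C \<union> A \<union> B"
    using not_mem_neighbours_self[OF graph]
    unfolding common_neighbours_def private_neighbours_def by auto
  then have "card (insert a (insert b (C \<union> A \<union> B))) = card C + card A + card B + 2"
    using finite_parts a_neq_b card_parts by simp
  moreover have "insert a (insert b (C \<union> A \<union> B)) \<subseteq> V"
    using parts_subset graph_on_edgeD[OF graph edge] by blast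
  ultimately show ?thesis using card_mono graph unfolding graph_on_def by metis
qed

lemma closing_paths_subset: "closing_paths E a b \<subseteq> (C \<union> B) \<times> (C \<union> A)"
  unfolding closing_paths_def using mem_C_iff mem_A_iff mem_B_iff by (auto simp: insert_commute)

lemma edge_ne: "{x, y} \<in> E \<Longrightarrow> x \<noteq> y"
  using graph_on_edgeD[OF graph] by blast

text \<open>Each of the following adjacencies would create two triangles sharing exactly one vertex.\<close>

lemma common_private_nonadjacent:
  assumes c: "c \<in> C" and d: "d \<in> A" and w: "w \<in> C" "w \<noteq> c"
  shows "{c, d} \<notin> E"
proof
  assume cd: "{c, d} \<in> E"
  have "{a, c} \<in> E" "{b, c} \<in> E" "{a, w} \<in> E" "{b, w} \<in> E" using c w mem_C_iff by blast+
  moreover have "{a, d} \<in> E" "d \<noteq> b" "{b, d} \<notin> E" using d mem_A_iff by blast+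
  moreover note edge_ne[OF cd] edge_ne[of a c] edge_ne[of a d] edge_ne[of a w] edge_ne[of b w]
    a_neq_b
  ultimately show False
    by (intro F2_freeD[OF F2, of a c d b w]) (use cd edge w(2) in \<open>auto simp: insert_commute\<close>)
qed

lemma private_common_nonadjacent:
  assumes c: "c \<in> B" and d: "d \<in> C" and w: "w \<in> C" "w \<noteq> d"
  shows "{c, d} \<notin> E"
proof
  assume cd: "{c, d} \<in> E"
  have "{a, d} \<in> E" "{b, d} \<in> E" "{a, w} \<in> E" "{b, w} \<in> E" using d w mem_C_iff by blast+
  moreover have "{b, c} \<in> E" "c \<noteq> a" "{a, c} \<notin> E" using c mem_B_iff by blast+
  moreover note edge_ne[OF cd] edge_ne[of b c] edge_ne[of b d] edge_ne[of a w] edge_ne[of b w]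
    a_neq_b
  ultimately show False
    by (intro F2_freeD[OF F2, of b d c a w]) (use cd edge w(2) in \<open>auto simp: insert_commute\<close>)
qed

lemma common_common_nonadjacent:
  assumes c: "c \<in> C" and d: "d \<in> C" and w: "w \<in> C" "w \<noteq> c" "w \<noteq> d"
  shows "{c, d} \<notin> E"
proof
  assume cd: "{c, d} \<in> E"
  have "{a, c} \<in> E" "{a, d} \<in> E" "{a, w} \<in> E" "{b, w} \<in> E" "{b, c} \<in> E" "{b, d} \<in> E"
    using c d w mem_C_iff by blast+
  moreover note edge_ne[OF cd] edge_ne[of a c] edge_ne[of a d] edge_ne[of a w] edge_ne[of b w]
    edge_ne[of b c] edge_ne[of b d] a_neq_b
  ultimately show False
    by (intro F2_freeD[OF F2, of a c d b w]) (use cd edge w(2,3) in \<open>auto simp: insert_commute\<close>)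
qed

lemma single_common_neighbour:
  assumes C: "C = {w}" and d: "d \<in> A" and c: "c \<in> B"
  shows "{w, d} \<notin> E \<or> {c, w} \<notin> E"
proof (rule ccontr)
  assume "\<not> ?thesis"
  then have wd: "{w, d} \<in> E" and cw: "{c, w} \<in> E" by auto
  have "{a, w} \<in> E" "{b, w} \<in> E" using C mem_C_iff by blast+
  moreover have "{a, d} \<in> E" "d \<noteq> b" "{b, d} \<notin> E" using d mem_A_iff by blast+
  moreover have "{b, c} \<in> E" "c \<noteq> a" "{a, c} \<notin> E" using c mem_B_iff by blast+
  moreover note edge_ne[OF wd] edge_ne[OF cw] edge_ne[of a w] edge_ne[of b w] edge_ne[of a d]
    edge_ne[of b c] a_neq_b
  ultimately show False
    by (intro F2_freeD[OF F2, of w a d b c]) (use wd cw edge in \<open>auto simp: insert_commute\<close>)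
qed

lemma closing_paths_subset_private:
  assumes "card C = 0 \<or> 3 \<le> card C"
  shows "closing_paths E a b \<subseteq> B \<times> A"
proof
  fix p assume p: "p \<in> closing_paths E a b"
  obtain c d where cd: "p = (c, d)" by (cases p)
  have "c \<in> C \<union> B" "d \<in> C \<union> A" using closing_paths_subset p cd by blast+
  moreover have "{c, d} \<in> E" using p cd unfolding closing_paths_def by auto
  moreover have "\<exists>w\<in>C. w \<noteq> c \<and> w \<noteq> d" if "c \<in> C \<or> d \<in> C"
  proof -
    have "3 \<le> card C" using assms that finite_parts(1) by auto
    then show ?thesis using exists_other_than_two[OF finite_parts(1)] by blast
  qed
  ultimately show "p \<in> B \<times> A"
    using cd common_private_nonadjacent private_common_nonadjacent common_common_nonadjacent
      by blast
qed

lemma closing_paths_subset_one_common: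
  assumes C: "C = {w}"
  shows "closing_paths E a b \<subseteq> insert w B \<times> A \<or> closing_paths E a b \<subseteq> B \<times> insert w A"
proof (rule ccontr)
  assume "\<not> ?thesis"
  then obtain c d c' d' where
    p: "(c, d) \<in> closing_paths E a b" "(c, d) \<notin> insert w B \<times> A" and
    p': "(c', d') \<in> closing_paths E a b" "(c', d') \<notin> B \<times> insert w A"
    by auto
  have "{c, d} \<in> E" "c \<noteq> d" "{c', d'} \<in> E" "c' \<noteq> d'"
    using p p' unfolding closing_paths_def by auto
  moreover have "c \<in> insert w B" "d \<in> insert w A" "c' \<in> insert w B" "d' \<in> insert w A"
    using p(1) p'(1) closing_paths_subset C by blast+
  then have "d = w" "c \<in> B" "c' = w" "d' \<in> A"
    using p(2) p'(2) \<open>c \<noteq> d\<close> \<open>c' \<noteq> d'\<close> by blast+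
  ultimately show False using single_common_neighbour[OF C] by blast
qed

lemma closing_paths_subset_two_common:
  assumes C: "C = {w, w'}" and "w \<noteq> w'"
  shows "closing_paths E a b \<subseteq> B \<times> A \<union> {(w, w'), (w', w)}"
proof
  fix p assume p: "p \<in> closing_paths E a b"
  obtain c d where cd: "p = (c, d)" by (cases p)
  have "c \<in> C \<union> B" "d \<in> C \<union> A" "c \<noteq> d" using closing_paths_subset p cd
    unfolding closing_paths_def by auto
  moreover have "{c, d} \<in> E" using p cd unfolding closing_paths_def by auto
  moreover have other: "\<exists>u\<in>C. u \<noteq> x" for x using C \<open>w \<noteq> w'\<close> by auto
  ultimately show "p \<in> B \<times> A \<union> {(w, w'), (w', w)}"
  proof (cases "c \<in> C")
    case True
    then have "d \<notin> A" using common_private_nonadjacent[of c d] other[of c] \<open>{c, d} \<in> E\<close> by blast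
    then have "d \<in> C" using \<open>d \<in> C \<union> A\<close> by blast
    then show ?thesis using True C cd \<open>c \<noteq> d\<close> by auto
  next
    case False
    then have "c \<in> B" using \<open>c \<in> C \<union> B\<close> by blast
    moreover have "d \<notin> C"
      using private_common_nonadjacent[OF \<open>c \<in> B\<close>] other[of d] \<open>{c, d} \<in> E\<close> by blast
    ultimately show ?thesis using \<open>d \<in> C \<union> A\<close> cd by blast
  qed
qed

lemma card_closing_paths_le_one_common:
  assumes C: "C = {w}"
  shows "card (closing_paths E a b) \<le> max ((card B + 1) * card A) (card B * (card A + 1))"
proof -
  have "w \<notin> A" "w \<notin> B" using C mem_A_iff mem_B_iff mem_C_iff by auto
  then have "card (insert w B) = card B + 1" "card (insert w A) = card A + 1"
    using finite_parts by simp_all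
  then show ?thesis
    using closing_paths_subset_one_common[OF C] finite_parts
      card_le_mult_if_subset_Times[of _ "insert w B" A]
      card_le_mult_if_subset_Times[of _ B "insert w A"]
    by (metis finite_insert max.coboundedI1 max.coboundedI2)
qed

lemma card_closing_paths_le_two_common:
  assumes C: "C = {w, w'}" "w \<noteq> w'"
  shows "card (closing_paths E a b) \<le> card B * card A + 2"
proof -
  have "card (closing_paths E a b) \<le> card (B \<times> A \<union> {(w, w'), (w', w)})"
    using closing_paths_subset_two_common[OF C] finite_parts by (intro card_mono) auto
  also have "\<dots> \<le> card (B \<times> A) + card {(w, w'), (w', w)}" by (rule card_Un_le)
  also have "\<dots> = card B * card A + 2" using C(2) by (simp add: card_cartesian_product)
  finally show ?thesis .
qed

text \<open>The sets C, A, B and {a, b} are disjoint, so the factors of the products above have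
total size at most n - 2.\<close>

lemma card_closing_paths_le:
  assumes n6: "6 \<le> card V"
  shows "card (closing_paths E a b) \<le> mantel_number (card V - 2)"
proof -
  have size: "card C + card A + card B + 2 \<le> card V" by (rule card_parts_le)
  consider (none_or_many) "card C = 0 \<or> 3 \<le> card C" | (one) "card C = 1" | (two) "card C = 2"
    by linarith
  then show ?thesis
  proof cases
    case none_or_many
    have "card B * card A \<le> mantel_number (card V - 2)"
      using size by (intro mult_le_mantel_number) linarith
    then show ?thesis
      using card_le_mult_if_subset_Times[OF closing_paths_subset_private[OF none_or_many]]
        finite_parts
      by simp
  next
    case one
    then obtain w where "C = {w}" by (rule card_1_singletonE)
    moreover have "(card B + 1) * card A \<le> mantel_number (card V - 2)"
      "card B * (card A + 1) \<le> mantel_number (card V - 2)"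
      using size one by (intro mult_le_mantel_number, linarith)+
    ultimately show ?thesis using card_closing_paths_le_one_common by fastforce
  next
    case two
    then obtain w w' where C: "C = {w, w'}" "w \<noteq> w'" by (meson card_2_iff)
    have "card B * card A + 2 \<le> mantel_number (card V - 2)"
    proof (cases "card A + card B = 0")
      case True
      moreover have "2 * 2 \<le> mantel_number (card V - 2)"
        using n6 by (intro mult_le_mantel_number) linarith
      ultimately show ?thesis by simp
    next
      case False
      then have "card B * card A + 2 \<le> (card B + 1) * (card A + 1)"
        by (simp add: algebra_simps, linarith)
      also have "\<dots> \<le> mantel_number (card V - 2)"
        using size two by (intro mult_le_mantel_number) linarith
      finally show ?thesis .
    qed
    then show ?thesis using card_closing_paths_le_two_common[OF C] by simp
  qed
qed

lemma common_neighbours_swap: "common_neighbours E b a = C"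
  unfolding common_neighbours_def by blast

lemma neighbours_of_common_neighbour:
  assumes "3 \<le> card C" "w \<in> C"
  shows "neighbours E w \<subseteq> V - (C \<union> A \<union> B)"
proof
  fix x assume x: "x \<in> neighbours E w"
  then have wx: "{w, x} \<in> E" "{x, w} \<in> E" by (simp_all add: neighbours_iff insert_commute)
  obtain w' where w': "w' \<in> C" "w' \<noteq> w" "w' \<noteq> x"
    using exists_other_than_two[OF finite_parts(1) assms(1)] by blast
  have "x \<notin> C" using common_common_nonadjacent[OF assms(2) _ w'(1)] w' wx by blast
  moreover have "x \<notin> A" using common_private_nonadjacent[OF assms(2) _ w'(1)] w' wx by blast
  moreover have "x \<notin> B" using private_common_nonadjacent[OF _ assms(2) w'(1)] w' wx by blast
  ultimately show "x \<in> V - (C \<union> A \<union> B)" using x neighbours_subset[OF graph] by blast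
qed

text \<open>A common neighbour w has no neighbours in C \<union> A \<union> B, so deg w \<ge> n/2 leaves room for at
most two private neighbours of a and of b.\<close>

lemma card_closing_paths_le_4:
  assumes deg: "\<forall>v\<in>V. card V div 2 \<le> card (neighbours E v)" and C3: "3 \<le> card C"
  shows "card (closing_paths E a b) \<le> 4"
proof -
  obtain w where w: "w \<in> C" using C3 by fastforce
  have finV: "finite V" using graph unfolding graph_on_def by blast
  have "card (V - (C \<union> A \<union> B)) = card V - (card C + card A + card B)"
    using parts_subset finite_parts by (simp add: card_Diff_subset card_parts)
  then have "card (neighbours E w) \<le> card V - (card C + card A + card B)"
    using card_mono[OF _ neighbours_of_common_neighbour[OF C3 w]] finV by simp
  moreover have "w \<in> V" "a \<in> V" "b \<in> V"
    using w neighbours_subset[OF graph] graph_on_edgeD[OF graph edge]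
    unfolding common_neighbours_def by blast+
  then have "card V div 2 \<le> card (neighbours E w)" "card V div 2 \<le> card (neighbours E a)"
    "card V div 2 \<le> card (neighbours E b)"
    using deg by blast+
  moreover note card_neighbours_eq
    F2_free_edge.card_neighbours_eq[OF swap, unfolded common_neighbours_swap]
  moreover have "card V \<le> 2 * (card V div 2) + 1" by linarith
  ultimately have "card A \<le> 2" "card B \<le> 2" using card_parts_le by linarith+
  then have "card B * card A \<le> 4" using mult_le_mono[of "card B" 2 "card A" 2] by simp
  moreover have "card (closing_paths E a b) \<le> card (B \<times> A)"
    using closing_paths_subset_private C3 finite_parts by (intro card_mono) auto
  ultimately show ?thesis by (simp add: card_cartesian_product)
qed

end

lemma card_closing_paths_subgraph_le:
  assumes g: "graph_on V E" and F: "F2_free E" and sub: "E' \<subseteq> E" and n6: "6 \<le> card V"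
    and ab: "{a, b} \<in> E"
  shows "card (closing_paths E' a b) \<le> mantel_number (card V - 2)"
proof -
  interpret F2_free_edge V E a b using g F ab by unfold_locales
  have "card (closing_paths E' a b) \<le> card (closing_paths E a b)"
    by (rule card_mono[OF finite_closing_paths[OF g] closing_paths_mono[OF sub]])
  also have "\<dots> \<le> mantel_number (card V - 2)" by (rule card_closing_paths_le[OF n6])
  finally show ?thesis .
qed

lemma four_mul_num_C4_le:
  assumes g: "graph_on V E" and F: "F2_free E" and sub: "E' \<subseteq> E" and n6: "6 \<le> card V"
  shows "4 * num_C4 E' \<le> card E' * mantel_number (card V - 2)"
proof -
  let ?M = "mantel_number (card V - 2)"
  have g': "graph_on V E'" by (rule graph_on_subset[OF g sub])
  have "8 * num_C4 E' \<le> (\<Sum>(a, b)\<in>arcs E'. card (closing_paths E' a b))"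
    by (rule eight_mul_num_C4_le_sum[OF g'])
  also have "\<dots> \<le> (\<Sum>_\<in>arcs E'. ?M)"
    by (rule sum_mono)
      (use card_closing_paths_subgraph_le[OF g F sub n6] sub in \<open>auto simp: arcs_def\<close>)
  also have "\<dots> = 2 * card E' * ?M" using card_arcs[OF g'] by simp
  finally show ?thesis by simp
qed

lemma four_mul_num_C4_le_spine:
  assumes g: "graph_on V E" and F: "F2_free E" and sub: "E' \<subseteq> E" and n6: "6 \<le> card V"
    and ab: "{a, b} \<in> E'"
    and few: "card (closing_paths E a b) \<le> 4" "card (closing_paths E b a) \<le> 4"
  shows "4 * num_C4 E' + mantel_number (card V - 2) \<le> card E' * mantel_number (card V - 2) + 4"
proof -
  let ?M = "mantel_number (card V - 2)" and ?f = "\<lambda>(x, y). card (closing_paths E' x y)"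
  let ?S = "{(a, b), (b, a)}"
  have g': "graph_on V E'" by (rule graph_on_subset[OF g sub])
  have S: "?S \<subseteq> arcs E'" using ab unfolding arcs_def by (auto simp: insert_commute)
  have cS: "card ?S = 2" using graph_on_edgeD[OF g' ab] by simp
  have "8 * num_C4 E' \<le> sum ?f (arcs E')" by (rule eight_mul_num_C4_le_sum[OF g'])
  also have "\<dots> = sum ?f (arcs E' - ?S) + sum ?f ?S"
    by (rule sum.subset_diff[OF S finite_arcs[OF g']])
  also have "sum ?f (arcs E' - ?S) \<le> (\<Sum>_\<in>arcs E' - ?S. ?M)"
    by (rule sum_mono)
      (use card_closing_paths_subgraph_le[OF g F sub n6] sub in \<open>auto simp: arcs_def\<close>)
  also have "sum ?f ?S \<le> 8"
  proof -
    have "card (closing_paths E' x y) \<le> card (closing_paths E x y)" for x y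
      by (rule card_mono[OF finite_closing_paths[OF g] closing_paths_mono[OF sub]])
    then have "card (closing_paths E' a b) \<le> 4" "card (closing_paths E' b a) \<le> 4"
      using few le_trans by blast+
    then show ?thesis using graph_on_edgeD[OF g' ab] by simp
  qed
  finally have bound: "8 * num_C4 E' \<le> (card (arcs E') - 2) * ?M + 8"
    using card_Diff_subset[OF _ S] cS by simp
  have "card (arcs E') = 2 * card E'" by (rule card_arcs[OF g'])
  moreover have "2 \<le> card (arcs E')" using card_mono[OF finite_arcs[OF g'] S] cS by simp
  ultimately have "(card (arcs E') - 2) * ?M + 2 * ?M = 2 * card E' * ?M"
    by (metis add_mult_distrib le_add_diff_inverse2)
  then show ?thesis using bound by linarith
qed

text \<open>If every edge had at most two common neighbours, inclusion-exclusion over the neighbourhoods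
of a triangle would give 3 (n div 2) \<le> n + 6, which fails for n \<ge> 16.\<close>

lemma exists_edge_three_common_neighbours:
  assumes g: "graph_on V E" and n16: "16 \<le> card V"
    and deg: "\<forall>v\<in>V. card V div 2 \<le> card (neighbours E v)"
    and triangle: "{u, v} \<in> E" "{u, w} \<in> E" "{v, w} \<in> E"
  shows "\<exists>a b. {a, b} \<in> E \<and> 3 \<le> card (common_neighbours E a b)"
proof (rule ccontr)
  assume "\<not> ?thesis"
  then have few: "card (neighbours E x \<inter> neighbours E y) \<le> 2" if "{x, y} \<in> E" for x y
    using that unfolding common_neighbours_def by fastforce
  let ?N = "neighbours E"
  have "card (?N u) + card (?N v) + card (?N w) \<le>
      card (?N u \<union> ?N v \<union> ?N w) + card (?N u \<inter> ?N v) + card (?N u \<inter> ?N w) + card (?N v \<inter> ?N w)"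
    by (intro card_add3_le_inclusion_exclusion finite_neighbours[OF g])
  moreover have "card (?N u \<union> ?N v \<union> ?N w) \<le> card V"
    using g neighbours_subset[OF g] unfolding graph_on_def by (metis Un_least card_mono)
  moreover have "u \<in> V" "v \<in> V" "w \<in> V" using graph_on_edgeD[OF g] triangle by blast+
  then have "card V div 2 \<le> card (?N u)" "card V div 2 \<le> card (?N v)" "card V div 2 \<le> card (?N w)"
    using deg by blast+
  moreover have "card (?N u \<inter> ?N v) \<le> 2" "card (?N u \<inter> ?N w) \<le> 2" "card (?N v \<inter> ?N w) \<le> 2"
    using few triangle by blast+
  moreover have "card V \<le> 2 * (card V div 2) + 1" by linarith
  ultimately show False using n16 by linarith
qed

lemma F2_free_extremal_spine:
  assumes g: "graph_on V E" and F: "F2_free E" and n16: "16 \<le> card V"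
    and extremal: "card E = mantel_number (card V) + 1"
  shows "\<exists>a b. {a, b} \<in> E \<and> card (closing_paths E a b) \<le> 4 \<and> card (closing_paths E b a) \<le> 4"
proof -
  have deg: "\<forall>v\<in>V. card V div 2 \<le> card (neighbours E v)"
    using F2_free_extremal_min_degree[OF g F _ extremal] n16 by simp
  have "\<not> card E \<le> mantel_number (card V)" using extremal by simp
  then obtain u v w where "{u, v} \<in> E" "{u, w} \<in> E" "{v, w} \<in> E"
    using mantel[OF g] by blast
  then obtain a b where ab: "{a, b} \<in> E" and C3: "3 \<le> card (common_neighbours E a b)"
    using exists_edge_three_common_neighbours[OF g n16 deg] by blast
  interpret F2_free_edge V E a b using g F ab by unfold_locales
  interpret ba: F2_free_edge V E b a by (rule swap)
  have "card (closing_paths E a b) \<le> 4" by (rule card_closing_paths_le_4[OF deg C3])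
  moreover have "card (closing_paths E b a) \<le> 4"
    by (rule ba.card_closing_paths_le_4[OF deg]) (use C3 common_neighbours_swap in simp)
  ultimately show ?thesis using ab by blast
qed

lemma two_mul_choose_two: "2 * (x choose 2) = x * (x - 1)"
proof -
  have "even (x * (x - 1))" by (cases x) simp_all
  then show ?thesis by (simp add: choose_two)
qed

lemma four_mul_choose_two_prod:
  "4 * ((n div 2 choose 2) * ((n + 1) div 2 choose 2)) = mantel_number n * mantel_number (n - 2)"
proof -
  let ?p = "n div 2" and ?q = "(n + 1) div 2"
  have "mantel_number (n - 2) = (?p - 1) * (?q - 1)"
  proof (cases "n < 2")
    case True
    then show ?thesis by (auto simp: mantel_number_def)
  next
    case False
    then obtain m where "n = m + 2" by (metis add.commute le_Suc_ex not_less)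
    then show ?thesis by (simp add: mantel_number_def)
  qed
  moreover have "4 * ((?p choose 2) * (?q choose 2)) = (2 * (?p choose 2)) * (2 * (?q choose 2))"
    by simp
  ultimately show ?thesis unfolding two_mul_choose_two mantel_number_def
    by (simp add: algebra_simps)
qed

lemma four_mul_colour_value_le:
  assumes g: "graph_on V E" and F: "F2_free E" and sub: "E1 \<subseteq> E" and n6: "6 \<le> card V"
  shows "4 * num_C4 E1 + 4 * card (E - E1) \<le> card E * mantel_number (card V - 2)"
proof -
  let ?M = "mantel_number (card V - 2)"
  have "4 * card (E - E1) \<le> card (E - E1) * ?M"
    using mult_le_mantel_number[of 2 2 "card V - 2"] n6 by simp
  moreover have "4 * num_C4 E1 \<le> card E1 * ?M" by (rule four_mul_num_C4_le[OF g F sub n6])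
  moreover have "card E * ?M = card E1 * ?M + card (E - E1) * ?M"
    using sub graph_on_finite_edges[OF g]
    by (metis add_mult_distrib card_Diff_subset card_mono finite_subset le_add_diff_inverse)
  ultimately show ?thesis by linarith
qed

lemma four_mul_colour_value_le_spine:
  assumes g: "graph_on V E" and F: "F2_free E" and sub: "E1 \<subseteq> E" and n6: "6 \<le> card V"
    and ab: "{a, b} \<in> E"
    and few: "card (closing_paths E a b) \<le> 4" "card (closing_paths E b a) \<le> 4"
  shows "4 * num_C4 E1 + 4 * card (E - E1) + mantel_number (card V - 2)
    \<le> card E * mantel_number (card V - 2) + 4"
proof -
  let ?M = "mantel_number (card V - 2)"
  have M4: "4 \<le> ?M" using mult_le_mantel_number[of 2 2 "card V - 2"] n6 by simp
  have split: "card E * ?M = card E1 * ?M + card (E - E1) * ?M"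
    using sub graph_on_finite_edges[OF g]
    by (metis add_mult_distrib card_Diff_subset card_mono finite_subset le_add_diff_inverse)
  show ?thesis
  proof (cases "{a, b} \<in> E1")
    case True
    have "4 * num_C4 E1 + ?M \<le> card E1 * ?M + 4"
      by (rule four_mul_num_C4_le_spine[OF g F sub n6 True few])
    moreover have "4 * card (E - E1) \<le> card (E - E1) * ?M" using M4 by simp
    ultimately show ?thesis using split by linarith
  next
    case False
    then have "card (E - E1) \<noteq> 0" using ab graph_on_finite_edges[OF g] by auto
    then obtain k where "card (E - E1) = k + 1"
      by (metis add.commute add_0 not0_implies_Suc plus_1_eq_Suc)
    then have "4 * card (E - E1) + ?M \<le> card (E - E1) * ?M + 4" using M4 by simp
    moreover have "4 * num_C4 E1 \<le> card E1 * ?M" by (rule four_mul_num_C4_le[OF g F sub n6])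
    ultimately show ?thesis using split by linarith
  qed
qed

theorem colour_value_le:
  assumes g: "graph_on V E" and F: "F2_free E" and sub: "E1 \<subseteq> E" and n16: "16 \<le> card V"
  shows "num_C4 E1 + card (E - E1) \<le> (card V div 2 choose 2) * ((card V + 1) div 2 choose 2) + 1"
proof -
  let ?K = "mantel_number (card V)" and ?M = "mantel_number (card V - 2)"
  have "4 * num_C4 E1 + 4 * card (E - E1) \<le> ?K * ?M + 4"
  proof (cases "card E \<le> ?K")
    case True
    then show ?thesis using four_mul_colour_value_le[OF g F sub] n16 mult_le_mono1[OF True, of ?M]
      by linarith
  next
    case False
    then have extremal: "card E = ?K + 1" using F2_free_card_edges_le[OF g F] n16 by fastforce
    then obtain a b where "{a, b} \<in> E"
      "card (closing_paths E a b) \<le> 4" "card (closing_paths E b a) \<le> 4"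
      using F2_free_extremal_spine[OF g F n16] by blast
    then show ?thesis using four_mul_colour_value_le_spine[OF g F sub] extremal n16 by simp
  qed
  then show ?thesis using four_mul_choose_two_prod[of "card V"] by linarith
qed

section \<open>The extremal colouring\<close>

definition complete_bipartite :: "'a set \<Rightarrow> 'a set \<Rightarrow> 'a set set" where
  "complete_bipartite X Y = {{x, y} | x y. x \<in> X \<and> y \<in> Y}"

lemma complete_bipartite_doubletons:
  "complete_bipartite {x, x'} {y, y'} = {{x, y}, {y, x'}, {x', y'}, {y', x}}"
  unfolding complete_bipartite_def by (auto simp: insert_commute)

lemma Union_complete_bipartite: "X \<noteq> {} \<Longrightarrow> Y \<noteq> {} \<Longrightarrow> \<Union>(complete_bipartite X Y) = X \<union> Y"
  unfolding complete_bipartite_def by blast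

lemma finite_complete_bipartite:
  "finite X \<Longrightarrow> finite Y \<Longrightarrow> finite (complete_bipartite X Y)"
proof -
  have "complete_bipartite X Y = (\<lambda>(x, y). {x, y}) ` (X \<times> Y)"
    unfolding complete_bipartite_def by auto
  then show "finite X \<Longrightarrow> finite Y \<Longrightarrow> ?thesis" by simp
qed

lemma num_C4_complete_bipartite_ge:
  fixes X Y :: "nat set"
  assumes fin: "finite X" "finite Y" and disj: "X \<inter> Y = {}"
  shows "(card X choose 2) * (card Y choose 2) \<le> num_C4 (complete_bipartite X Y)"
proof -
  let ?PX = "{S. S \<subseteq> X \<and> card S = 2}" and ?PY = "{T. T \<subseteq> Y \<and> card T = 2}"
  let ?K = "\<lambda>(S, T). complete_bipartite S T"
  have "?K p \<in> {Q. Q \<subseteq> complete_bipartite X Y \<and> is_C4 Q}" if p: "p \<in> ?PX \<times> ?PY" for p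
  proof -
    obtain S T where ST: "p = (S, T)" "S \<subseteq> X" "card S = 2" "T \<subseteq> Y" "card T = 2"
      using p by (cases p) auto
    then obtain x x' y y' where xy: "S = {x, x'}" "x \<noteq> x'" "T = {y, y'}" "y \<noteq> y'"
      by (meson card_2_iff)
    have "distinct [x, y, x', y']" using xy ST disj by auto
    moreover have "?K p = {{x, y}, {y, x'}, {x', y'}, {y', x}}"
      using ST(1) xy by (simp add: complete_bipartite_doubletons)
    moreover have "?K p \<subseteq> complete_bipartite X Y"
      using ST unfolding complete_bipartite_def by auto
    ultimately show ?thesis unfolding is_C4_def by blast
  qed
  then have image: "?K ` (?PX \<times> ?PY) \<subseteq> {Q. Q \<subseteq> complete_bipartite X Y \<and> is_C4 Q}" by blast
  have inj: "inj_on ?K (?PX \<times> ?PY)"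
  proof (rule inj_onI)
    fix p q assume p: "p \<in> ?PX \<times> ?PY" and q: "q \<in> ?PX \<times> ?PY" and eq: "?K p = ?K q"
    obtain S T S' T' where pq: "p = (S, T)" "q = (S', T')" by fastforce
    have sub: "S \<subseteq> X" "T \<subseteq> Y" "S' \<subseteq> X" "T' \<subseteq> Y" using p q pq by auto
    have "S \<noteq> {}" "T \<noteq> {}" "S' \<noteq> {}" "T' \<noteq> {}" using p q pq by auto
    then have "\<Union>(?K p) = S \<union> T" "\<Union>(?K q) = S' \<union> T'"
      using pq by (simp_all add: Union_complete_bipartite)
    then have "S \<union> T = S' \<union> T'" using eq by simp
    then have "S = S'" "T = T'" using sub disj by blast+
    then show "p = q" using pq by simp
  qed
  have "finite {Q. Q \<subseteq> complete_bipartite X Y \<and> is_C4 Q}"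
    using finite_complete_bipartite[OF fin] by simp
  then have "card (?K ` (?PX \<times> ?PY)) \<le> num_C4 (complete_bipartite X Y)"
    unfolding num_C4_def using image by (rule card_mono)
  then have "card (?PX \<times> ?PY) \<le> num_C4 (complete_bipartite X Y)" using card_image[OF inj] by simp
  then show ?thesis
    using n_subsets[OF fin(1)] n_subsets[OF fin(2)] by (simp add: card_cartesian_product)
qed

lemma complete_bipartite_edge_sides:
  "{x, y} \<in> complete_bipartite X Y \<Longrightarrow> X \<inter> Y = {} \<Longrightarrow> x \<in> X \<longleftrightarrow> y \<notin> X"
  unfolding complete_bipartite_def by (auto simp: doubleton_eq_iff)

lemma triangle_complete_bipartite_insert:
  assumes disj: "X \<inter> Y = {}"
    and triangle: "{x, y} \<in> insert e (complete_bipartite X Y)"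
      "{x, z} \<in> insert e (complete_bipartite X Y)" "{y, z} \<in> insert e (complete_bipartite X Y)"
  shows "e \<in> {{x, y}, {x, z}, {y, z}}"
proof (rule ccontr)
  assume "\<not> ?thesis"
  then have "{x, y} \<in> complete_bipartite X Y" "{x, z} \<in> complete_bipartite X Y"
    "{y, z} \<in> complete_bipartite X Y"
    using triangle by auto
  then show False using complete_bipartite_edge_sides[OF _ disj] by blast
qed

lemma F2_free_complete_bipartite_insert:
  assumes "X \<inter> Y = {}"
  shows "F2_free (insert e (complete_bipartite X Y))"
  unfolding F2_free_def
proof (intro notI, elim exE conjE)
  fix a b c d f
  let ?G = "insert e (complete_bipartite X Y)"
  assume distinct: "distinct [a, b, c, d, f]"
    and abc: "{a, b} \<in> ?G" "{a, c} \<in> ?G" "{b, c} \<in> ?G"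
    and adf: "{a, d} \<in> ?G" "{a, f} \<in> ?G" "{d, f} \<in> ?G"
  have "e \<in> {{a, b}, {a, c}, {b, c}}" by (rule triangle_complete_bipartite_insert[OF assms abc])
  moreover have "e \<in> {{a, d}, {a, f}, {d, f}}"
    by (rule triangle_complete_bipartite_insert[OF assms adf])
  ultimately show False using distinct by (auto simp: doubleton_eq_iff)
qed

lemma colour_value_attained:
  assumes n4: "4 \<le> n"
  shows "\<exists>E E1. is_graph_on n E \<and> F2_free E \<and> E1 \<subseteq> E \<and>
    (n div 2 choose 2) * ((n + 1) div 2 choose 2) + 1 \<le> num_C4 E1 + card (E - E1)"
proof (intro exI conjI)
  let ?X = "{..<n div 2}" and ?Y = "{n div 2..<n}"
  let ?K = "complete_bipartite ?X ?Y"
  have disj: "?X \<inter> ?Y = {}" by auto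
  show "is_graph_on n (insert {0, 1} ?K)"
    using n4 unfolding is_graph_on_def complete_bipartite_def by auto
  show "F2_free (insert {0, 1} ?K)" by (rule F2_free_complete_bipartite_insert[OF disj])
  show "?K \<subseteq> insert {0, 1} ?K" by blast
  have "{0, 1} \<notin> ?K" using complete_bipartite_edge_sides[OF _ disj, of 0 1] n4 by auto
  then have "insert {0, 1} ?K - ?K = {{0, 1}}" by blast
  then have "card (insert {0, 1} ?K - ?K) = 1" by simp
  moreover have "n - n div 2 = (n + 1) div 2" by simp
  then have "(n div 2 choose 2) * ((n + 1) div 2 choose 2) \<le> num_C4 ?K"
    using num_C4_complete_bipartite_ge[OF _ _ disj] by simp
  ultimately show "(n div 2 choose 2) * ((n + 1) div 2 choose 2) + 1
      \<le> num_C4 ?K + card (insert {0, 1} ?K - ?K)" by simp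
qed

theorem mainTheorem9:
  shows "\<exists>N. \<forall>n\<ge>N. excol_C4_K2_F2 n =
    ((n div 2) choose 2) * (((n + 1) div 2) choose 2) + 1"
proof (intro exI allI impI)
  fix n :: nat assume n16: "16 \<le> n"
  let ?T = "((n div 2) choose 2) * (((n + 1) div 2) choose 2) + 1"
  let ?S = "{num_C4 E1 + card (E - E1) | E E1. is_graph_on n E \<and> F2_free E \<and> E1 \<subseteq> E}"
  have upper: "\<forall>x\<in>?S. x \<le> ?T"
  proof
    fix x assume "x \<in> ?S"
    then obtain E E1 where "x = num_C4 E1 + card (E - E1)" "graph_on {..<n} E" "F2_free E" "E1 \<subseteq> E"
      by (auto simp: is_graph_on_iff)
    then show "x \<le> ?T" using colour_value_le[of "{..<n}" E E1] n16 by simp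
  qed
  obtain x where x: "x \<in> ?S" "?T \<le> x" using colour_value_attained[of n] n16 by auto
  have "x \<le> ?T" using upper x(1) by blast
  then have "x = ?T" using x(2) by (rule antisym)
  then have attained: "?T \<in> ?S" using x(1) by (rule subst)
  have "?S \<subseteq> {..?T}" using upper atMost_iff by blast
  then have "finite ?S" by (rule finite_subset) simp
  then have "Max ?S = ?T" by (rule Max_eqI[OF _ _ attained]) (use upper in blast)
  then show "excol_C4_K2_F2 n = ?T" unfolding excol_C4_K2_F2_def .
qed

end
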